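(* Under the hypotheses of the previous statement (i.e. $c>0$, $m+\frac d2>1$, $\phi_k$ a bounded real solution on $[-1,1]$ of $\big((1-\eta)(1+\eta)^{m+\frac d2}\phi_k'\big)'+\big(\alpha_k-\frac{c^2(1+\eta)}{8}\big)(1+\eta)^{m+\frac d2-1}\phi_k=0$ normalized by $\int_{-1}^1(1+t)^{m+\frac d2-1}|\phi_k(t)|^2dt=2^{m+\frac d2-1}$, and $\alpha_k>\frac{c^2}{4}$), we have $$\sup_{\eta\in[a_{m,d},1]}|\phi_k(\eta)|\le\frac{3\sqrt3}{2}\sqrt{2^{m+\frac d2+1}\big(m+\tfrac d2-1\big)}\;\alpha_k^{1/2},\qquad a_{m,d}=\frac{2m+d-2}{2m+d}.$$
   Context: This is the radial equation of ball prolate spheroidal wave functions $\psi(x)=r^m\phi_k(2r^2-1)Y(\hat x)$, where $\alpha_k=\frac14(\chi^{(m)}_k(c)-m(m+d))$ and $\chi^{(m)}_k(c)$ is the corresponding eigenvalue of $\mathcal{L}_c=-\nabla\cdot(1-\|x\|^2)\nabla-\Delta_0+c^2\|x\|^2$. *)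

theory Defs
  imports "HOL-Analysis.Analysis"
begin

end

theory Submission
  imports Defs
begin

text \<open>
  Write \<open>\<beta> = m + d/2\<close> and let \<open>F t = (1 - t) (1 + t)^\<beta> \<phi>' t\<close> be the flux of the equation,
  so \<open>F' = - q (1 + t)^(\<beta> - 1) \<phi>\<close> with \<open>0 < q \<le> \<alpha>\<close>.  Since \<open>\<phi>\<close> is bounded, \<open>F\<close> vanishes at
  both endpoints (otherwise \<open>\<phi>'\<close> would be of order \<open>1 / (1 \<mp> t)\<close> and \<open>\<phi>\<close> would diverge
  logarithmically).  Integrating \<open>F'\<close> from the endpoints bounds \<open>|\<phi>'|\<close> by \<open>\<alpha> max |\<phi>|\<close>; on
  \<open>[1 - 1/\<beta>, 1]\<close>, where \<open>(1 + t)^\<beta> \<ge> 2^(\<beta> - 1)\<close>, only the values of \<open>\<phi>\<close> to the right of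
  \<open>t\<close> enter.  As \<open>F\<close> vanishes at both ends, \<open>\<phi>\<close> changes sign, which with the derivative bound
  gives \<open>\<alpha> \<ge> 1/2\<close>.  Finally, if \<open>M\<close> is the maximum of \<open>|\<phi>|\<close> on \<open>[1 - 1/\<beta>, 1]\<close>, then
  \<open>|\<phi>| \<ge> 2M/3\<close> on an interval of length \<open>l = min (1/(2\<beta>)) (1/(3\<alpha>))\<close> there, and the
  normalisation gives \<open>l (2M/3)^2 \<le> 2^(\<beta> - 1)\<close>, i.e. \<open>M^2 \<le> 27 (\<beta> - 1) \<alpha> 2^(\<beta> - 1)\<close>.
\<close>

lemma abs_diff_le_of_DERIV_bound:
  fixes f f' k k' :: "real \<Rightarrow> real"
  assumes "x \<le> y" "continuous_on {x..y} f" "continuous_on {x..y} k"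
    and f': "\<And>t. x < t \<Longrightarrow> t < y \<Longrightarrow> (f has_real_derivative f' t) (at t)"
    and k': "\<And>t. x < t \<Longrightarrow> t < y \<Longrightarrow> (k has_real_derivative k' t) (at t)"
    and le: "\<And>t. x < t \<Longrightarrow> t < y \<Longrightarrow> \<bar>f' t\<bar> \<le> k' t"
  shows "\<bar>f y - f x\<bar> \<le> k y - k x"
proof -
  have "k x - \<sigma> * f x \<le> k y - \<sigma> * f y" if "\<bar>\<sigma>\<bar> = 1" for \<sigma>
  proof (rule DERIV_nonneg_imp_increasing_open[OF \<open>x \<le> y\<close>, where f = "\<lambda>t. k t - \<sigma> * f t"])
    fix t assume t: "x < t" "t < y"
    have "\<sigma> * f' t \<le> k' t"
      using that le[OF t] abs_ge_self[of "\<sigma> * f' t"] by (simp add: abs_mult)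
    then show "\<exists>D. ((\<lambda>t. k t - \<sigma> * f t) has_real_derivative D) (at t) \<and> 0 \<le> D"
      using f'[OF t] k'[OF t] by (intro exI conjI derivative_eq_intros) (auto simp: mult.commute)
  qed (use assms in \<open>auto intro!: continuous_intros\<close>)
  from this[of 1] this[of "-1"] show ?thesis
    by linarith
qed

lemma not_bounded_of_log_DERIV_lower_bound:
  fixes f f' :: "real \<Rightarrow> real"
  assumes "x < 1" "0 < k"
    and f': "\<And>t. x \<le> t \<Longrightarrow> t < 1 \<Longrightarrow> (f has_real_derivative f' t) (at t)"
    and lower: "\<And>t. x \<le> t \<Longrightarrow> t < 1 \<Longrightarrow> k / (1 - t) \<le> f' t"
  shows "\<not> bounded (f ` {x..<1})"
proof
  assume "bounded (f ` {x..<1})"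
  then obtain B where "\<forall>t\<in>{x..<1}. \<bar>f t\<bar> \<le> B"
    by (auto simp: bounded_real)
  then have B: "\<bar>f t\<bar> \<le> B" if "x \<le> t" "t < 1" for t
    using that by simp
  define X where "X = (2 * B + 1) / k"
  define y where "y = 1 - (1 - x) * exp (- X)"
  have "0 < X"
    using B[of x] assms by (simp add: X_def)
  then have "(1 - x) * exp (- X) \<le> 1 - x"
    using \<open>x < 1\<close> by (intro mult_left_le) auto
  then have y: "x \<le> y" "y < 1"
    unfolding y_def using \<open>x < 1\<close> by (linarith, simp)
  have "f x + k * ln (1 - x) \<le> f y + k * ln (1 - y)"
  proof (rule deriv_nonneg_imp_mono[where g = "\<lambda>t. f t + k * ln (1 - t)"])
    fix t assume "t \<in> {x..y}"
    then have t: "x \<le> t" "t < 1"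
      using y by auto
    show "((\<lambda>t. f t + k * ln (1 - t)) has_real_derivative f' t - k / (1 - t)) (at t)"
      using f'[OF t] t by (auto intro!: derivative_eq_intros simp: field_simps)
    show "0 \<le> f' t - k / (1 - t)"
      using lower[OF t] by simp
  qed (use y in auto)
  moreover have "ln (1 - y) = ln (1 - x) - X"
    using \<open>x < 1\<close> by (simp add: y_def ln_mult)
  moreover have "k * X = 2 * B + 1"
    using \<open>0 < k\<close> by (simp add: X_def)
  ultimately show False
    using B[of x] B[of y] y \<open>x < 1\<close> by (simp add: algebra_simps)
qed

lemma not_bounded_of_log_DERIV_lower_bound_left:
  fixes f f' :: "real \<Rightarrow> real"
  assumes "-1 < x" "0 < k"
    and f': "\<And>t. -1 < t \<Longrightarrow> t \<le> x \<Longrightarrow> (f has_real_derivative f' t) (at t)"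
    and lower: "\<And>t. -1 < t \<Longrightarrow> t \<le> x \<Longrightarrow> k / (1 + t) \<le> f' t"
  shows "\<not> bounded (f ` {-1<..x})"
proof
  assume "bounded (f ` {-1<..x})"
  moreover have "uminus ` f ` {-1<..x} = (\<lambda>u. - f (- u)) ` uminus ` {-1<..x}"
    by (simp only: image_image minus_minus)
  then have "uminus ` f ` {-1<..x} = (\<lambda>u. - f (- u)) ` {-x..<1}"
    by simp
  moreover have "\<not> bounded ((\<lambda>u. - f (- u)) ` {-x..<1})"
  proof (rule not_bounded_of_log_DERIV_lower_bound[where f' = "\<lambda>u. f' (- u)"])
    fix u assume u: "-x \<le> u" "u < 1"
    show "((\<lambda>u. - f (- u)) has_real_derivative f' (- u)) (at u)"
      using DERIV_minus[OF iffD1[OF DERIV_mirror, OF f'[of "- u"]]] u by simp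
    show "k / (1 - u) \<le> f' (- u)"
      using lower[of "- u"] u by simp
  qed (use assms in auto)
  ultimately show False
    by (metis bounded_uminus)
qed

lemma two_powr_le_one_plus_powr:
  fixes \<beta> t :: real
  assumes "1 \<le> \<beta>" "1 - 1 / \<beta> \<le> t"
  shows "2 powr (\<beta> - 1) \<le> (1 + t) powr \<beta>"
proof -
  define x where "x = 1 - 1 / (2 * \<beta>)"
  have x: "0 < x" "1 + (1 - 1 / \<beta>) = 2 * x"
    using assms by (auto simp: x_def field_simps)
  \<comment> \<open>tangent line of the convex function \<open>x powr \<beta>\<close> at \<open>x = 1\<close>\<close>
  have "\<beta> * (x - 1) \<le> x powr \<beta> - 1 powr \<beta>"
  proof (rule convex_on_imp_above_tangent[OF powr_convex[OF \<open>1 \<le> \<beta>\<close>]])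
    show "((\<lambda>x. x powr \<beta>) has_real_derivative \<beta>) (at 1 within {0<..})"
      by (auto intro!: derivative_eq_intros)
  qed (use x in \<open>auto simp: interior_open\<close>)
  then have "1 / 2 \<le> x powr \<beta>"
    using assms by (simp add: x_def field_simps)
  then have "2 powr \<beta> * (1 / 2) \<le> 2 powr \<beta> * x powr \<beta>"
    by simp
  also have "\<dots> = (1 + (1 - 1 / \<beta>)) powr \<beta>"
    using x by (simp add: powr_mult)
  also have "\<dots> \<le> (1 + t) powr \<beta>"
    using assms by (intro powr_mono2) (auto simp: field_simps)
  finally show ?thesis
    by (simp add: powr_diff)
qed


lemma has_integral_ge_on_subinterval:
  fixes F :: "real \<Rightarrow> real"
  assumes F: "(F has_integral P) {a..b}" and nonneg: "\<And>t. t \<in> {a..b} \<Longrightarrow> 0 \<le> F t"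
    and sub: "{u..v} \<subseteq> {a..b}" "u \<le> v" and ge: "\<And>t. t \<in> {u..v} \<Longrightarrow> c \<le> F t"
  shows "(v - u) * c \<le> P"
proof -
  have "F integrable_on {u..v}"
    using integrable_on_subinterval[OF _ sub(1)] F by blast
  then have "integral {u..v} (\<lambda>_. c) \<le> integral {u..v} F"
    by (intro integral_le ge) auto
  also have "\<dots> \<le> integral {a..b} F"
    using F nonneg by (intro integral_subset_le[OF sub(1) \<open>F integrable_on _\<close>]) auto
  also have "\<dots> = P"
    using F by blast
  finally show ?thesis
    using \<open>u \<le> v\<close> by simp
qed

lemma one_le_twelve_min:
  fixes \<alpha> \<beta> :: real
  assumes "1 / 2 \<le> \<alpha>" "3 / 2 \<le> \<beta>"
  shows "1 \<le> 12 * min (1 / (2 * \<beta>)) (1 / (3 * \<alpha>)) * (\<beta> - 1) * \<alpha>"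
proof (cases "1 / (2 * \<beta>) \<le> 1 / (3 * \<alpha>)")
  case True
  have "(\<beta> - 1) * 3 \<le> (\<beta> - 1) * (6 * \<alpha>)"
    using assms by (intro mult_left_mono) auto
  then have "\<beta> \<le> 6 * (\<beta> - 1) * \<alpha>"
    using assms by (simp add: algebra_simps)
  moreover have "12 * (1 / (2 * \<beta>)) * (\<beta> - 1) * \<alpha> = 6 * (\<beta> - 1) * \<alpha> / \<beta>"
    by simp
  ultimately show ?thesis
    using True assms by (simp add: min_def le_divide_eq)
next
  case False
  then have "12 * min (1 / (2 * \<beta>)) (1 / (3 * \<alpha>)) * (\<beta> - 1) * \<alpha> = 4 * (\<beta> - 1)"
    using assms by (simp add: min_def)
  then show ?thesis
    using assms by simp
qed

lemma sqrt_27_mult_powr_eq: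
  fixes \<alpha> \<beta> :: real
  assumes "0 \<le> \<alpha>"
  shows "sqrt (27 * (\<beta> - 1) * \<alpha> * 2 powr (\<beta> - 1))
    = 3 * sqrt 3 / 2 * sqrt (2 powr (\<beta> + 1) * (\<beta> - 1)) * \<alpha> powr (1 / 2)"
proof -
  have "2 powr (\<beta> + 1) = 2 powr ((\<beta> - 1) + 2)"
    by (simp add: add.commute)
  also have "\<dots> = 2 powr (\<beta> - 1) * 2 powr 2"
    by (rule powr_add)
  also have "\<dots> = 4 * 2 powr (\<beta> - 1)"
    by simp
  finally have pow: "2 powr (\<beta> + 1) = 4 * 2 powr (\<beta> - 1)" .
  have sqrt27: "3 * sqrt 3 / 2 = sqrt (27 / 4)"
    by (rule real_sqrt_unique[symmetric]) (auto simp: power_mult_distrib power_divide)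
  have "3 * sqrt 3 / 2 * sqrt (2 powr (\<beta> + 1) * (\<beta> - 1)) * \<alpha> powr (1 / 2)
      = sqrt (27 / 4) * sqrt (4 * 2 powr (\<beta> - 1) * (\<beta> - 1)) * sqrt \<alpha>"
    by (simp only: pow sqrt27 powr_half_sqrt[OF assms])
  also have "\<dots> = sqrt (27 / 4 * (4 * 2 powr (\<beta> - 1) * (\<beta> - 1)) * \<alpha>)"
    by (simp only: real_sqrt_mult)
  also have "\<dots> = sqrt (27 * (\<beta> - 1) * \<alpha> * 2 powr (\<beta> - 1))"
    by (rule arg_cong[where f = sqrt]) (simp add: field_simps)
  finally show ?thesis
    by (rule sym)
qed

locale radial_equation =
  fixes \<beta> \<alpha> :: real and q \<phi> \<phi>' :: "real \<Rightarrow> real"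
  assumes exponent_ge_one: "1 \<le> \<beta>"
    and coefficient_pos: "\<And>t. -1 < t \<Longrightarrow> t < 1 \<Longrightarrow> 0 < q t"
    and coefficient_le: "\<And>t. -1 < t \<Longrightarrow> t < 1 \<Longrightarrow> q t \<le> \<alpha>"
    and continuous: "continuous_on {-1..1} \<phi>"
    and has_derivative: "\<And>t. -1 < t \<Longrightarrow> t < 1 \<Longrightarrow> (\<phi> has_real_derivative \<phi>' t) (at t)"
    and equation: "\<And>t. -1 < t \<Longrightarrow> t < 1 \<Longrightarrow>
      ((\<lambda>t. (1 - t) * (1 + t) powr \<beta> * \<phi>' t) has_real_derivative
        - (q t * (1 + t) powr (\<beta> - 1) * \<phi> t)) (at t)"
begin

definition flux :: "real \<Rightarrow> real"
  where "flux t = (1 - t) * (1 + t) powr \<beta> * \<phi>' t"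

lemma has_derivative_flux:
  "-1 < t \<Longrightarrow> t < 1 \<Longrightarrow>
    (flux has_real_derivative - (q t * (1 + t) powr (\<beta> - 1) * \<phi> t)) (at t)"
  using equation unfolding flux_def[abs_def] .

lemma continuous_on_flux: "-1 < x \<Longrightarrow> y < 1 \<Longrightarrow> continuous_on {x..y} flux"
  by (rule DERIV_atLeastAtMost_imp_continuous_on) (auto intro!: exI has_derivative_flux)

lemma alpha_pos: "0 < \<alpha>"
  using coefficient_pos[of 0] coefficient_le[of 0] by simp

lemma abs_flux_derivative_le:
  assumes "-1 < t" "t < 1" "\<bar>\<phi> t\<bar> \<le> B"
  shows "\<bar>q t * (1 + t) powr (\<beta> - 1) * \<phi> t\<bar> \<le> \<alpha> * B * (1 + t) powr (\<beta> - 1)"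
proof -
  have "\<bar>q t * (1 + t) powr (\<beta> - 1) * \<phi> t\<bar> = q t * \<bar>\<phi> t\<bar> * (1 + t) powr (\<beta> - 1)"
    using coefficient_pos[OF assms(1,2)] by (simp add: abs_mult)
  also have "\<dots> \<le> \<alpha> * B * (1 + t) powr (\<beta> - 1)"
    using assms coefficient_pos[OF assms(1,2)] coefficient_le[OF assms(1,2)]
    by (intro mult_right_mono mult_mono) auto
  finally show ?thesis .
qed

lemma flux_not_bounded_away_right:
  assumes "-1 < \<eta>" "\<eta> < 1" "0 < \<epsilon>" "\<bar>s\<bar> \<le> 1"
    and B: "\<And>t. \<eta> \<le> t \<Longrightarrow> t < 1 \<Longrightarrow> \<bar>\<phi> t\<bar> \<le> B"
  shows "\<exists>t\<in>{\<eta>..<1}. s * flux t < \<epsilon>"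
proof (rule ccontr)
  assume "\<not> (\<exists>t\<in>{\<eta>..<1}. s * flux t < \<epsilon>)"
  then have flux_ge: "\<epsilon> \<le> s * flux t" if "\<eta> \<le> t" "t < 1" for t
    using that by force
  \<comment> \<open>since \<open>(1 + t) powr \<beta> \<le> 2 powr \<beta>\<close>, the flux bound makes \<open>s * \<phi>\<close> grow like \<open>- ln (1 - t)\<close>\<close>
  have "\<epsilon> / 2 powr \<beta> / (1 - t) \<le> s * \<phi>' t" if t: "\<eta> \<le> t" "t < 1" for t
  proof -
    have "\<epsilon> \<le> (1 - t) * (1 + t) powr \<beta> * (s * \<phi>' t)"
      using flux_ge[OF t] by (simp add: flux_def mult_ac)
    moreover have "0 < (1 - t) * (1 + t) powr \<beta>"
      using t assms by simp
    ultimately have "0 < s * \<phi>' t"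
      using \<open>0 < \<epsilon>\<close> by (meson zero_less_mult_pos less_le_trans)
    have "(1 + t) powr \<beta> \<le> 2 powr \<beta>"
      using t assms exponent_ge_one by (intro powr_mono2) auto
    then have "(1 - t) * (1 + t) powr \<beta> * (s * \<phi>' t) \<le> (1 - t) * 2 powr \<beta> * (s * \<phi>' t)"
      using \<open>0 < s * \<phi>' t\<close> t by (intro mult_right_mono mult_left_mono) auto
    with \<open>\<epsilon> \<le> _\<close> have "\<epsilon> \<le> (1 - t) * 2 powr \<beta> * (s * \<phi>' t)"
      by linarith
    then show ?thesis
      using t by (simp add: field_simps)
  qed
  then have "\<not> bounded ((\<lambda>t. s * \<phi> t) ` {\<eta>..<1})"
    using \<open>0 < \<epsilon>\<close> assms has_derivative
    by (intro not_bounded_of_log_DERIV_lower_bound[where k = "\<epsilon> / 2 powr \<beta>" and f' = "\<lambda>t. s * \<phi>' t"])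
      (auto intro!: derivative_eq_intros)
  moreover have "\<bar>s * \<phi> t\<bar> \<le> B" if "t \<in> {\<eta>..<1}" for t
  proof -
    have "\<bar>s\<bar> * \<bar>\<phi> t\<bar> \<le> \<bar>\<phi> t\<bar>"
      using \<open>\<bar>s\<bar> \<le> 1\<close> by (intro mult_left_le_one_le) auto
    then show ?thesis
      using that B[of t] by (simp add: abs_mult)
  qed
  ultimately show False
    unfolding bounded_real by blast
qed

lemma abs_flux_le_right:
  assumes "-1 < \<eta>" "\<eta> < 1" and B: "\<And>t. \<eta> \<le> t \<Longrightarrow> t < 1 \<Longrightarrow> \<bar>\<phi> t\<bar> \<le> B"
  shows "\<bar>flux \<eta>\<bar> \<le> \<alpha> * B * 2 powr (\<beta> - 1) * (1 - \<eta>)"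
proof (rule ccontr)
  define K where "K = \<alpha> * B * 2 powr (\<beta> - 1)"
  define s where "s = sgn (flux \<eta>)"
  define \<epsilon> where "\<epsilon> = \<bar>flux \<eta>\<bar> - K * (1 - \<eta>)"
  assume "\<not> \<bar>flux \<eta>\<bar> \<le> \<alpha> * B * 2 powr (\<beta> - 1) * (1 - \<eta>)"
  then have "0 < \<epsilon>"
    by (simp add: \<epsilon>_def K_def)
  have "0 \<le> B"
    using B[of \<eta>] assms by force
  then have "0 \<le> K"
    using alpha_pos by (simp add: K_def)
  have s: "s * flux \<eta> = \<bar>flux \<eta>\<bar>" "\<bar>s\<bar> \<le> 1"
    by (auto simp: s_def sgn_mult_self_eq abs_sgn sgn_if)
  have "\<epsilon> \<le> s * flux t" if t: "\<eta> \<le> t" "t < 1" for t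
  proof -
    have "\<bar>flux t - flux \<eta>\<bar> \<le> K * t - K * \<eta>"
    proof (rule abs_diff_le_of_DERIV_bound[OF t(1) continuous_on_flux])
      fix u assume u: "\<eta> < u" "u < t"
      show "(flux has_real_derivative - (q u * (1 + u) powr (\<beta> - 1) * \<phi> u)) (at u)"
        using u assms t by (intro has_derivative_flux) auto
      have "\<bar>q u * (1 + u) powr (\<beta> - 1) * \<phi> u\<bar> \<le> \<alpha> * B * (1 + u) powr (\<beta> - 1)"
        by (rule abs_flux_derivative_le) (use B u assms t in auto)
      also have "\<dots> \<le> K"
        unfolding K_def using \<open>0 \<le> B\<close> alpha_pos u assms t exponent_ge_one
        by (intro mult_left_mono powr_mono2) auto
      finally show "\<bar>- (q u * (1 + u) powr (\<beta> - 1) * \<phi> u)\<bar> \<le> K"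
        by simp
    qed (use assms t in \<open>auto intro!: derivative_eq_intros continuous_intros\<close>)
    moreover have "\<bar>s * flux \<eta> - s * flux t\<bar> \<le> \<bar>flux t - flux \<eta>\<bar>"
      using s(2) by (simp add: abs_mult abs_minus_commute mult_left_le_one_le flip: right_diff_distrib)
    moreover have "K * t \<le> K"
      using \<open>0 \<le> K\<close> t by (simp add: mult_left_le)
    ultimately show ?thesis
      using s(1) unfolding \<epsilon>_def right_diff_distrib by linarith
  qed
  then show False
    using flux_not_bounded_away_right[OF assms(1,2) \<open>0 < \<epsilon>\<close> s(2) B] by force
qed

lemma flux_not_bounded_away_left:
  assumes "-1 < \<eta>" "\<eta> < 1" "0 < \<epsilon>" "\<bar>s\<bar> \<le> 1"
    and B: "\<And>t. -1 < t \<Longrightarrow> t \<le> \<eta> \<Longrightarrow> \<bar>\<phi> t\<bar> \<le> B"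
  shows "\<exists>t\<in>{-1<..\<eta>}. s * flux t < \<epsilon>"
proof (rule ccontr)
  assume "\<not> (\<exists>t\<in>{-1<..\<eta>}. s * flux t < \<epsilon>)"
  then have flux_ge: "\<epsilon> \<le> s * flux t" if "-1 < t" "t \<le> \<eta>" for t
    using that by force
  define t\<^sub>0 where "t\<^sub>0 = min \<eta> 0"
  \<comment> \<open>for \<open>t \<le> 0\<close> we have \<open>(1 + t) powr \<beta> \<le> 1 + t\<close>, so \<open>s * \<phi>\<close> decays like \<open>ln (1 + t)\<close>\<close>
  have "\<epsilon> / 2 / (1 + t) \<le> s * \<phi>' t" if t: "-1 < t" "t \<le> t\<^sub>0" for t
  proof -
    have "\<epsilon> \<le> (1 - t) * (1 + t) powr \<beta> * (s * \<phi>' t)"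
      using flux_ge t by (simp add: flux_def t\<^sub>0_def mult_ac)
    moreover have "0 < (1 - t) * (1 + t) powr \<beta>"
      using t by (simp add: t\<^sub>0_def)
    ultimately have "0 < s * \<phi>' t"
      using \<open>0 < \<epsilon>\<close> by (meson zero_less_mult_pos less_le_trans)
    have "(1 + t) powr \<beta> \<le> 1 + t"
      using t exponent_ge_one by (intro powr_le_one_le) (auto simp: t\<^sub>0_def)
    then have "(1 - t) * (1 + t) powr \<beta> \<le> 2 * (1 + t)"
      using t by (intro mult_mono) (auto simp: t\<^sub>0_def)
    then have "(1 - t) * (1 + t) powr \<beta> * (s * \<phi>' t) \<le> 2 * (1 + t) * (s * \<phi>' t)"
      using \<open>0 < s * \<phi>' t\<close> by (intro mult_right_mono) auto
    with \<open>\<epsilon> \<le> _\<close> have "\<epsilon> \<le> 2 * (1 + t) * (s * \<phi>' t)"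
      by linarith
    then show ?thesis
      using t by (simp add: field_simps)
  qed
  then have "\<not> bounded ((\<lambda>t. s * \<phi> t) ` {-1<..t\<^sub>0})"
    using \<open>0 < \<epsilon>\<close> assms has_derivative
    by (intro not_bounded_of_log_DERIV_lower_bound_left[where k = "\<epsilon> / 2" and f' = "\<lambda>t. s * \<phi>' t"])
      (auto simp: t\<^sub>0_def intro!: derivative_eq_intros)
  moreover have "\<bar>s * \<phi> t\<bar> \<le> B" if "t \<in> {-1<..t\<^sub>0}" for t
  proof -
    have "\<bar>s\<bar> * \<bar>\<phi> t\<bar> \<le> \<bar>\<phi> t\<bar>"
      using \<open>\<bar>s\<bar> \<le> 1\<close> by (intro mult_left_le_one_le) auto
    then show ?thesis
      using that B[of t] by (simp add: abs_mult t\<^sub>0_def)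
  qed
  ultimately show False
    unfolding bounded_real by blast
qed

lemma abs_flux_le_left:
  assumes "-1 < \<eta>" "\<eta> < 1" and B: "\<And>t. -1 < t \<Longrightarrow> t \<le> \<eta> \<Longrightarrow> \<bar>\<phi> t\<bar> \<le> B"
  shows "\<bar>flux \<eta>\<bar> \<le> \<alpha> * B * (1 + \<eta>) powr \<beta> / \<beta>"
proof (rule ccontr)
  define W where "W t = \<alpha> * B * (1 + t) powr \<beta> / \<beta>" for t
  define s where "s = sgn (flux \<eta>)"
  define \<epsilon> where "\<epsilon> = \<bar>flux \<eta>\<bar> - W \<eta>"
  assume "\<not> \<bar>flux \<eta>\<bar> \<le> \<alpha> * B * (1 + \<eta>) powr \<beta> / \<beta>"
  then have "0 < \<epsilon>"
    by (simp add: \<epsilon>_def W_def)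
  have "0 \<le> B"
    using B[of \<eta>] assms by force
  have s: "s * flux \<eta> = \<bar>flux \<eta>\<bar>" "\<bar>s\<bar> \<le> 1"
    by (auto simp: s_def sgn_mult_self_eq abs_sgn sgn_if)
  have "\<epsilon> \<le> s * flux t" if t: "-1 < t" "t \<le> \<eta>" for t
  proof -
    have "\<bar>flux \<eta> - flux t\<bar> \<le> W \<eta> - W t"
    proof (rule abs_diff_le_of_DERIV_bound[OF t(2) continuous_on_flux])
      fix u assume u: "t < u" "u < \<eta>"
      show "(flux has_real_derivative - (q u * (1 + u) powr (\<beta> - 1) * \<phi> u)) (at u)"
        using u assms t by (intro has_derivative_flux) auto
      show "(W has_real_derivative \<alpha> * B * (1 + u) powr (\<beta> - 1)) (at u)"
        unfolding W_def using u t exponent_ge_one by (auto intro!: derivative_eq_intros)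
      show "\<bar>- (q u * (1 + u) powr (\<beta> - 1) * \<phi> u)\<bar> \<le> \<alpha> * B * (1 + u) powr (\<beta> - 1)"
        using abs_flux_derivative_le[of u B] B[of u] u assms t by simp
    qed (use assms t exponent_ge_one in \<open>auto simp: W_def intro!: continuous_intros\<close>)
    moreover have "\<bar>s * flux \<eta> - s * flux t\<bar> \<le> \<bar>flux \<eta> - flux t\<bar>"
      using s(2) by (simp add: abs_mult mult_left_le_one_le flip: right_diff_distrib)
    moreover have "0 \<le> W t"
      using \<open>0 \<le> B\<close> alpha_pos exponent_ge_one by (simp add: W_def)
    ultimately show ?thesis
      using s(1) unfolding \<epsilon>_def by linarith
  qed
  then show False
    using flux_not_bounded_away_left[OF assms(1,2) \<open>0 < \<epsilon>\<close> s(2) B] by force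
qed

lemma abs_derivative_le_near_one:
  assumes "1 - 1 / \<beta> \<le> t" "t < 1" and B: "\<And>s. t \<le> s \<Longrightarrow> s < 1 \<Longrightarrow> \<bar>\<phi> s\<bar> \<le> B"
  shows "\<bar>\<phi>' t\<bar> \<le> \<alpha> * B"
proof -
  have "0 \<le> 1 - 1 / \<beta>"
    using exponent_ge_one by (simp add: field_simps)
  then have "-1 < t"
    using assms by linarith
  have "(1 - t) * ((1 + t) powr \<beta> * \<bar>\<phi>' t\<bar>) \<le> (1 - t) * (\<alpha> * B * 2 powr (\<beta> - 1))"
    using abs_flux_le_right[OF \<open>-1 < t\<close> \<open>t < 1\<close> B] \<open>-1 < t\<close> \<open>t < 1\<close>
    by (simp add: flux_def abs_mult mult_ac)
  then have "(1 + t) powr \<beta> * \<bar>\<phi>' t\<bar> \<le> \<alpha> * B * 2 powr (\<beta> - 1)"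
    using \<open>t < 1\<close> by simp
  moreover have "2 powr (\<beta> - 1) * \<bar>\<phi>' t\<bar> \<le> (1 + t) powr \<beta> * \<bar>\<phi>' t\<bar>"
    using two_powr_le_one_plus_powr[OF exponent_ge_one assms(1)] by (intro mult_right_mono) auto
  ultimately have "2 powr (\<beta> - 1) * \<bar>\<phi>' t\<bar> \<le> 2 powr (\<beta> - 1) * (\<alpha> * B)"
    using mult.commute[of "\<alpha> * B" "2 powr (\<beta> - 1)"] by linarith
  then show ?thesis
    by (simp add: mult_le_cancel_left_pos)
qed

lemma abs_derivative_le:
  assumes "-1 < t" "t < 1" and B: "\<And>s. -1 \<le> s \<Longrightarrow> s \<le> 1 \<Longrightarrow> \<bar>\<phi> s\<bar> \<le> B"
  shows "\<bar>\<phi>' t\<bar> \<le> \<alpha> * B"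
proof (cases "1 - 1 / \<beta> \<le> t")
  case True
  then show ?thesis
    by (rule abs_derivative_le_near_one[OF _ \<open>t < 1\<close>]) (use B assms in auto)
next
  case False
  have "(1 + t) powr \<beta> * ((1 - t) * \<bar>\<phi>' t\<bar>) \<le> (1 + t) powr \<beta> * (\<alpha> * B / \<beta>)"
    using abs_flux_le_left[OF assms(1,2), of B] B assms by (simp add: flux_def abs_mult mult_ac)
  moreover have "0 < (1 + t) powr \<beta>"
    using assms by simp
  ultimately have "(1 - t) * \<bar>\<phi>' t\<bar> \<le> \<alpha> * B / \<beta>"
    by (simp only: mult_le_cancel_left_pos)
  then have "\<beta> * ((1 - t) * \<bar>\<phi>' t\<bar>) \<le> \<alpha> * B"
    using exponent_ge_one by (simp add: field_simps)
  moreover have "\<bar>\<phi>' t\<bar> * 1 \<le> \<bar>\<phi>' t\<bar> * (\<beta> * (1 - t))"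
    using False exponent_ge_one by (intro mult_left_mono) (auto simp: field_simps)
  moreover have "\<bar>\<phi>' t\<bar> * (\<beta> * (1 - t)) = \<beta> * ((1 - t) * \<bar>\<phi>' t\<bar>)"
    by (simp only: mult_ac)
  ultimately show ?thesis
    by linarith
qed

lemma lipschitz_on_Icc:
  assumes "-1 \<le> lo" "hi \<le> 1" "0 \<le> L" and L: "\<And>t. lo < t \<Longrightarrow> t < hi \<Longrightarrow> \<bar>\<phi>' t\<bar> \<le> L"
  shows "L-lipschitz_on {lo..hi} \<phi>"
proof (rule lipschitz_onI[OF _ \<open>0 \<le> L\<close>])
  have le: "\<bar>\<phi> y - \<phi> x\<bar> \<le> L * y - L * x" if "lo \<le> x" "x \<le> y" "y \<le> hi" for x y
  proof (rule abs_diff_le_of_DERIV_bound[OF \<open>x \<le> y\<close>, where f' = \<phi>' and k' = "\<lambda>_. L"])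
    show "continuous_on {x..y} \<phi>"
      using that assms by (intro continuous_on_subset[OF continuous]) auto
    show "continuous_on {x..y} ((*) L)"
      by (intro continuous_intros)
    fix t assume "x < t" "t < y"
    then show "(\<phi> has_real_derivative \<phi>' t) (at t)" "((*) L has_real_derivative L) (at t)"
        "\<bar>\<phi>' t\<bar> \<le> L"
      using that assms has_derivative L by (auto intro!: derivative_eq_intros)
  qed
  fix x y assume "x \<in> {lo..hi}" "y \<in> {lo..hi}"
  then show "dist (\<phi> x) (\<phi> y) \<le> L * dist x y"
    using le[of x y] le[of y x]
    by (cases "x \<le> y") (auto simp: dist_real_def abs_minus_commute right_diff_distrib)
qed

lemma abs_attains_max:
  assumes "-1 \<le> lo" "lo \<le> hi" "hi \<le> 1"
  obtains x where "lo \<le> x" "x \<le> hi" "\<And>t. lo \<le> t \<Longrightarrow> t \<le> hi \<Longrightarrow> \<bar>\<phi> t\<bar> \<le> \<bar>\<phi> x\<bar>"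
proof -
  have "continuous_on {lo..hi} (\<lambda>t. \<bar>\<phi> t\<bar>)"
    using assms by (intro continuous_intros continuous_on_subset[OF continuous]) auto
  then show ?thesis
    using continuous_attains_sup[OF compact_Icc] assms that by force
qed

lemma flux_tendsto_left: "(flux \<longlongrightarrow> 0) (at_right (-1))"
proof -
  obtain x where max: "\<And>t. -1 \<le> t \<Longrightarrow> t \<le> 1 \<Longrightarrow> \<bar>\<phi> t\<bar> \<le> \<bar>\<phi> x\<bar>"
    by (rule abs_attains_max[of "-1" 1]) auto
  have pointwise: "norm (flux t) \<le> \<alpha> * \<bar>\<phi> x\<bar> * (1 + t) powr \<beta> / \<beta>" if "t \<in> {-1<..<1}" for t
    unfolding real_norm_def using that by (intro abs_flux_le_left) (auto intro: max)
  have bound: "\<forall>\<^sub>F t in at_right (-1). norm (flux t) \<le> \<alpha> * \<bar>\<phi> x\<bar> * (1 + t) powr \<beta> / \<beta>"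
    by (rule eventually_mono[OF eventually_at_right_real[of "-1" 1] pointwise]) simp
  have "((\<lambda>t::real. t - (-1)) \<longlongrightarrow> 0) (at_right (-1))"
    by (rule LIM_zero[OF tendsto_ident_at])
  then have "((\<lambda>t::real. 1 + t) \<longlongrightarrow> 0) (at_right (-1))"
    by (simp add: add.commute)
  moreover have "\<forall>\<^sub>F t in at_right (-1). 0 \<le> 1 + (t::real)"
    by (rule eventually_mono[OF eventually_at_right_real[of "-1" 0]]) auto
  ultimately have "((\<lambda>t. (1 + t) powr \<beta>) \<longlongrightarrow> 0) (at_right (-1))"
    using exponent_ge_one by (intro tendsto_zero_powrI[OF _ tendsto_const]) simp_all
  then have "((\<lambda>t. \<alpha> * \<bar>\<phi> x\<bar> * (1 + t) powr \<beta> / \<beta>) \<longlongrightarrow> 0) (at_right (-1))"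
    by (rule tendsto_divide_zero[OF tendsto_mult_right_zero])
  with bound show ?thesis
    by (rule Lim_null_comparison)
qed

lemma flux_tendsto_right: "(flux \<longlongrightarrow> 0) (at_left 1)"
proof -
  obtain x where max: "\<And>t. -1 \<le> t \<Longrightarrow> t \<le> 1 \<Longrightarrow> \<bar>\<phi> t\<bar> \<le> \<bar>\<phi> x\<bar>"
    by (rule abs_attains_max[of "-1" 1]) auto
  have pointwise: "norm (flux t) \<le> \<alpha> * \<bar>\<phi> x\<bar> * 2 powr (\<beta> - 1) * (1 - t)" if "t \<in> {-1<..<1}" for t
    unfolding real_norm_def using that by (intro abs_flux_le_right) (auto intro: max)
  have bound: "\<forall>\<^sub>F t in at_left 1. norm (flux t) \<le> \<alpha> * \<bar>\<phi> x\<bar> * 2 powr (\<beta> - 1) * (1 - t)"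
    by (rule eventually_mono[OF eventually_at_left_real[of "-1" 1] pointwise]) simp
  have "((\<lambda>t. \<alpha> * \<bar>\<phi> x\<bar> * 2 powr (\<beta> - 1) * (1 - t))
      \<longlongrightarrow> \<alpha> * \<bar>\<phi> x\<bar> * 2 powr (\<beta> - 1) * (1 - 1)) (at_left 1)"
    by (intro tendsto_intros)
  then have "((\<lambda>t. \<alpha> * \<bar>\<phi> x\<bar> * 2 powr (\<beta> - 1) * (1 - t)) \<longlongrightarrow> 0) (at_left 1)"
    by simp
  with bound show ?thesis
    by (rule Lim_null_comparison)
qed

lemma flux_strict_antimono:
  assumes pos: "\<And>t. -1 < t \<Longrightarrow> t < 1 \<Longrightarrow> 0 < \<phi> t * v"
    and "-1 < x" "x < y" "y < 1"
  shows "v * flux y < v * flux x"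
proof (rule DERIV_neg_imp_decreasing[OF \<open>x < y\<close>])
  fix t assume "x \<le> t" "t \<le> y"
  then have t: "-1 < t" "t < 1"
    using assms by auto
  have "((\<lambda>t. v * flux t) has_real_derivative v * - (q t * (1 + t) powr (\<beta> - 1) * \<phi> t)) (at t)"
    by (rule DERIV_cmult[OF has_derivative_flux[OF t]])
  moreover have "0 < q t * (1 + t) powr (\<beta> - 1) * (\<phi> t * v)"
    using coefficient_pos[OF t] pos[OF t] t by simp
  then have "v * - (q t * (1 + t) powr (\<beta> - 1) * \<phi> t) < 0"
    by (simp add: algebra_simps)
  ultimately show "\<exists>D. ((\<lambda>t. v * flux t) has_real_derivative D) (at t) \<and> D < 0"
    by blast
qed

lemma exists_sign_change:
  obtains t where "-1 < t" "t < 1" "\<phi> t * v \<le> 0"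
proof -
  have "\<exists>t. -1 < t \<and> t < 1 \<and> \<phi> t * v \<le> 0"
  proof (rule ccontr)
    assume "\<nexists>t. -1 < t \<and> t < 1 \<and> \<phi> t * v \<le> 0"
    then have pos: "0 < \<phi> t * v" if "-1 < t" "t < 1" for t
      using that by force
    define H where "H t = v * flux t" for t
    have H_less: "H y < H x" if "-1 < x" "x < y" "y < 1" for x y
      unfolding H_def using flux_strict_antimono[OF pos that] .
    have lim_left: "(H \<longlongrightarrow> 0) (at_right (-1))" and lim_right: "(H \<longlongrightarrow> 0) (at_left 1)"
      unfolding H_def[abs_def] using flux_tendsto_left flux_tendsto_right
      by (auto intro: tendsto_mult_right_zero)
    have left: "H (-1/2) \<le> H t" if "t \<in> {-1<..<-1/2}" for t
      using that H_less[of t "-1/2"] by simp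
    have right: "H t \<le> H 0" if "t \<in> {0<..<1}" for t
      using that H_less[of 0 t] by simp
    have "H (-1/2) \<le> 0"
      by (rule tendsto_lowerbound[OF lim_left eventually_mono[OF eventually_at_right_real left]])
        (simp_all add: trivial_limit_at_right_real)
    moreover have "0 \<le> H 0"
      by (rule tendsto_upperbound[OF lim_right eventually_mono[OF eventually_at_left_real right]])
        (simp_all add: trivial_limit_at_left_real)
    moreover have "H 0 < H (-1/2)"
      by (rule H_less) auto
    ultimately show False
      by linarith
  qed
  then show ?thesis
    using that by blast
qed

lemma half_le_alpha:
  assumes "-1 \<le> x" "x \<le> 1" "\<phi> x \<noteq> 0"
  shows "1 / 2 \<le> \<alpha>"
proof -
  obtain x\<^sub>0 where x\<^sub>0: "-1 \<le> x\<^sub>0" "x\<^sub>0 \<le> 1"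
    and max: "\<And>t. -1 \<le> t \<Longrightarrow> t \<le> 1 \<Longrightarrow> \<bar>\<phi> t\<bar> \<le> \<bar>\<phi> x\<^sub>0\<bar>"
    by (rule abs_attains_max[of "-1" 1]) auto
  define N where "N = \<bar>\<phi> x\<^sub>0\<bar>"
  have "0 < N"
    using max[OF assms(1,2)] assms(3) by (simp add: N_def)
  obtain x\<^sub>1 where x\<^sub>1: "-1 < x\<^sub>1" "x\<^sub>1 < 1" "\<phi> x\<^sub>1 * \<phi> x\<^sub>0 \<le> 0"
    by (rule exists_sign_change)
  have lip: "(\<alpha> * N)-lipschitz_on {-1..1} \<phi>"
  proof (rule lipschitz_on_Icc)
    show "0 \<le> \<alpha> * N"
      using alpha_pos \<open>0 < N\<close> by simp
    fix t :: real assume "-1 < t" "t < 1"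
    then show "\<bar>\<phi>' t\<bar> \<le> \<alpha> * N"
      by (rule abs_derivative_le) (simp add: N_def max)
  qed simp_all
  have "N \<le> \<bar>\<phi> x\<^sub>0 - \<phi> x\<^sub>1\<bar>"
    using x\<^sub>1(3) by (auto simp: N_def mult_le_0_iff)
  also have "\<dots> \<le> \<alpha> * N * \<bar>x\<^sub>0 - x\<^sub>1\<bar>"
    using lipschitz_onD[OF lip, of x\<^sub>0 x\<^sub>1] x\<^sub>0 x\<^sub>1 by (simp add: dist_real_def)
  also have "\<dots> \<le> \<alpha> * N * 2"
    using x\<^sub>0 x\<^sub>1 alpha_pos \<open>0 < N\<close> by (intro mult_left_mono) auto
  finally have "N * 1 \<le> N * (2 * \<alpha>)"
    by (simp add: mult_ac)
  then show ?thesis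
    using \<open>0 < N\<close> by (simp only: mult_le_cancel_left_pos)
qed

lemma mass_near_peak:
  assumes norm: "((\<lambda>t. (1 + t) powr (\<beta> - 1) * \<bar>\<phi> t\<bar>\<^sup>2) has_integral P) {-1..1}"
    and x: "1 - 1 / \<beta> \<le> x" "x \<le> 1"
    and peak: "\<And>t. 1 - 1 / \<beta> \<le> t \<Longrightarrow> t \<le> 1 \<Longrightarrow> \<bar>\<phi> t\<bar> \<le> \<bar>\<phi> x\<bar>"
    and l: "0 < l" "l \<le> 1 / (2 * \<beta>)" "\<alpha> * l \<le> 1 / 3"
  shows "l * (2 / 3 * \<bar>\<phi> x\<bar>)\<^sup>2 \<le> P"
proof -
  define a where "a = 1 - 1 / \<beta>"
  define M where "M = \<bar>\<phi> x\<bar>"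
  have "0 \<le> a" "2 * l \<le> 1 - a"
    using exponent_ge_one l by (auto simp: a_def field_simps)
  have lip: "(\<alpha> * M)-lipschitz_on {a..1} \<phi>"
  proof (rule lipschitz_on_Icc)
    show "0 \<le> \<alpha> * M"
      using alpha_pos by (simp add: M_def)
    fix t :: real assume "a < t" "t < 1"
    then show "\<bar>\<phi>' t\<bar> \<le> \<alpha> * M"
      by (intro abs_derivative_le_near_one) (auto simp: a_def M_def peak)
  qed (use \<open>0 \<le> a\<close> in auto)
  obtain u where u: "a \<le> u" "u + l \<le> 1" "x \<in> {u..u + l}"
  proof (cases "x + l \<le> 1")
    case True
    then show ?thesis
      using x l that[of x] by (auto simp: a_def)
  next
    case False
    then show ?thesis
      using x \<open>2 * l \<le> 1 - a\<close> that[of "x - l"] by auto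
  qed
  have "(2 / 3 * M)\<^sup>2 \<le> (1 + t) powr (\<beta> - 1) * \<bar>\<phi> t\<bar>\<^sup>2" if t: "t \<in> {u..u + l}" for t
  proof -
    have "\<bar>\<phi> t - \<phi> x\<bar> \<le> \<alpha> * M * \<bar>t - x\<bar>"
      using lipschitz_onD[OF lip, of t x] t u by (simp add: dist_real_def)
    also have "\<dots> \<le> \<alpha> * M * l"
      using t u alpha_pos by (intro mult_left_mono) (auto simp: M_def)
    also have "\<dots> = M * (\<alpha> * l)"
      by (simp only: mult_ac)
    also have "\<dots> \<le> M * (1 / 3)"
      using l(3) by (intro mult_left_mono) (auto simp: M_def)
    finally have "2 / 3 * M \<le> \<bar>\<phi> t\<bar>"
      unfolding M_def by linarith
    then have "(2 / 3 * M)\<^sup>2 \<le> \<bar>\<phi> t\<bar>\<^sup>2"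
      by (rule power_mono) (simp add: M_def)
    also have "\<dots> \<le> (1 + t) powr (\<beta> - 1) * \<bar>\<phi> t\<bar>\<^sup>2"
    proof -
      have "1 \<le> (1 + t) powr (\<beta> - 1)"
        using t u \<open>0 \<le> a\<close> exponent_ge_one by (intro ge_one_powr_ge_zero) auto
      then show ?thesis
        using mult_right_mono[of 1 _ "\<bar>\<phi> t\<bar>\<^sup>2"] by simp
    qed
    finally show ?thesis .
  qed
  then have "(u + l - u) * (2 / 3 * M)\<^sup>2 \<le> P"
    using u \<open>0 \<le> a\<close> l by (intro has_integral_ge_on_subinterval[OF norm]) auto
  then show ?thesis
    by (simp add: M_def)
qed

lemma abs_le_near_one:
  assumes "3 / 2 \<le> \<beta>"
    and norm: "((\<lambda>t. (1 + t) powr (\<beta> - 1) * \<bar>\<phi> t\<bar>\<^sup>2) has_integral P) {-1..1}"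
    and \<eta>: "1 - 1 / \<beta> \<le> \<eta>" "\<eta> \<le> 1"
  shows "\<bar>\<phi> \<eta>\<bar> \<le> sqrt (27 * (\<beta> - 1) * \<alpha> * P)"
proof -
  have lo: "-1 \<le> 1 - 1 / \<beta>" "1 - 1 / \<beta> \<le> 1"
    using exponent_ge_one by (auto simp: field_simps)
  obtain x where x: "1 - 1 / \<beta> \<le> x" "x \<le> 1"
    and peak: "\<And>t. 1 - 1 / \<beta> \<le> t \<Longrightarrow> t \<le> 1 \<Longrightarrow> \<bar>\<phi> t\<bar> \<le> \<bar>\<phi> x\<bar>"
    by (rule abs_attains_max[OF lo order_refl]) blast
  define M where "M = \<bar>\<phi> x\<bar>"
  have "0 \<le> P"
    by (rule has_integral_nonneg[OF norm]) simp
  have "M\<^sup>2 \<le> 27 * (\<beta> - 1) * \<alpha> * P"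
  proof (cases "M = 0")
    case True
    then show ?thesis
      using \<open>0 \<le> P\<close> alpha_pos assms(1) by simp
  next
    case False
    have "-1 \<le> x"
      using x lo by linarith
    then have "1 / 2 \<le> \<alpha>"
      using half_le_alpha x False by (simp add: M_def)
    define l where "l = min (1 / (2 * \<beta>)) (1 / (3 * \<alpha>))"
    have "l \<le> 1 / (3 * \<alpha>)"
      by (simp add: l_def)
    then have "\<alpha> * l \<le> 1 / 3"
      using alpha_pos by (simp add: field_simps)
    moreover have "0 < l" "l \<le> 1 / (2 * \<beta>)"
      using alpha_pos assms(1) by (auto simp: l_def)
    ultimately have "l * (2 / 3 * M)\<^sup>2 \<le> P"
      unfolding M_def by (intro mass_near_peak[OF norm x peak])
    have "M\<^sup>2 * 1 \<le> M\<^sup>2 * (12 * l * (\<beta> - 1) * \<alpha>)"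
      using one_le_twelve_min \<open>1 / 2 \<le> \<alpha>\<close> assms(1) by (intro mult_left_mono) (auto simp: l_def)
    also have "\<dots> = 27 * (\<beta> - 1) * \<alpha> * (l * (2 / 3 * M)\<^sup>2)"
      by (simp add: power_mult_distrib power2_eq_square)
    also have "\<dots> \<le> 27 * (\<beta> - 1) * \<alpha> * P"
      using \<open>l * _ \<le> P\<close> alpha_pos assms(1) by (intro mult_left_mono) auto
    finally show ?thesis
      by simp
  qed
  then have "M \<le> sqrt (27 * (\<beta> - 1) * \<alpha> * P)"
    by (rule real_le_rsqrt)
  then show ?thesis
    using peak[OF \<eta>] by (simp add: M_def)
qed

end

lemma radial_equation_prolate:
  fixes \<beta> c \<alpha> :: real and \<phi> \<phi>' :: "real \<Rightarrow> real"
  assumes "1 \<le> \<beta>" "c\<^sup>2 / 4 < \<alpha>" "continuous_on {-1..1} \<phi>"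
    and "\<forall>\<eta>\<in>{-1<..<1}. (\<phi> has_real_derivative \<phi>' \<eta>) (at \<eta>)"
    and "\<forall>\<eta>\<in>{-1<..<1}. ((\<lambda>t. (1 - t) * (1 + t) powr \<beta> * \<phi>' t) has_real_derivative
      - ((\<alpha> - c\<^sup>2 * (1 + \<eta>) / 8) * (1 + \<eta>) powr (\<beta> - 1) * \<phi> \<eta>)) (at \<eta>)"
  shows "radial_equation \<beta> \<alpha> (\<lambda>t. \<alpha> - c\<^sup>2 * (1 + t) / 8) \<phi> \<phi>'"
proof
  fix t :: real assume t: "-1 < t" "t < 1"
  have "c\<^sup>2 * (1 + t) \<le> c\<^sup>2 * 2"
    using t by (intro mult_left_mono) auto
  then show "0 < \<alpha> - c\<^sup>2 * (1 + t) / 8"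
    using assms(2) by simp
  show "\<alpha> - c\<^sup>2 * (1 + t) / 8 \<le> \<alpha>"
    using t by simp
qed (use assms in auto)

theorem proposition3p8:
  fixes m d :: nat and c \<alpha> :: real and \<phi> \<phi>' :: "real \<Rightarrow> real"
  assumes d_pos: "d \<ge> 1"
    and c_pos: "c > 0"
    and beta_gt: "real m + real d / 2 > 1"
    and bounded: "bounded (\<phi> ` {-1..1})"
    and cont: "continuous_on {-1..1} \<phi>"
    and deriv1: "\<forall>\<eta>\<in>{-1<..<1}. (\<phi> has_real_derivative \<phi>' \<eta>) (at \<eta>)"
    and ode: "\<forall>\<eta>\<in>{-1<..<1}.
       ((\<lambda>t. (1 - t) * (1 + t) powr (real m + real d / 2) * \<phi>' t) has_real_derivative
          (- ((\<alpha> - c\<^sup>2 * (1 + \<eta>) / 8) * (1 + \<eta>) powr (real m + real d / 2 - 1) * \<phi> \<eta>))) (at \<eta>)"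
    and norm: "((\<lambda>t. (1 + t) powr (real m + real d / 2 - 1) * \<bar>\<phi> t\<bar>\<^sup>2) has_integral
                 2 powr (real m + real d / 2 - 1)) {-1..1}"
    and alpha_gt: "\<alpha> > c\<^sup>2 / 4"
  shows "\<forall>\<eta>\<in>{(2 * real m + real d - 2) / (2 * real m + real d)..1}.
           \<bar>\<phi> \<eta>\<bar> \<le> (3 * sqrt 3 / 2) * sqrt (2 powr (real m + real d / 2 + 1) * (real m + real d / 2 - 1)) * \<alpha> powr (1/2)"
proof -
  define \<beta> where "\<beta> = real m + real d / 2"
  \<comment> \<open>\<open>2 * \<beta>\<close> is an integer greater than 2\<close>
  have "2 < 2 * m + d"
    using beta_gt by linarith
  then have "3 / 2 \<le> \<beta>"
    unfolding \<beta>_def by linarith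
  interpret radial_equation \<beta> \<alpha> "\<lambda>t. \<alpha> - c\<^sup>2 * (1 + t) / 8" \<phi> \<phi>'
    using \<open>3 / 2 \<le> \<beta>\<close> alpha_gt cont deriv1 ode unfolding \<beta>_def
    by (intro radial_equation_prolate) auto
  have "(2 * real m + real d - 2) / (2 * real m + real d) = 1 - 1 / \<beta>"
    using \<open>3 / 2 \<le> \<beta>\<close> by (simp add: \<beta>_def field_simps)
  then have "\<bar>\<phi> \<eta>\<bar> \<le> sqrt (27 * (\<beta> - 1) * \<alpha> * 2 powr (\<beta> - 1))"
    if "\<eta> \<in> {(2 * real m + real d - 2) / (2 * real m + real d)..1}" for \<eta>
    using abs_le_near_one[OF \<open>3 / 2 \<le> \<beta>\<close> norm[folded \<beta>_def]] that by auto
  then show ?thesis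
    unfolding \<beta>_def[symmetric] sqrt_27_mult_powr_eq[OF less_imp_le[OF alpha_pos], symmetric]
    by blast
qed

end
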